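(* Let $m\ge 2$ and let $a_1,a_2,b_1,\dots,b_m,c_1,\dots,c_m$ be real numbers with $a_1\ne a_2$, $b_1>b_2>\dots>b_m$, $c_1>c_2>\dots>c_m$, and $a_1+(m-1)a_2=\sum_{i=1}^m(b_i+c_i)$. Let ${\bf B}$ be the $m\times m$ matrix with $B_{ij}=b_i+c_{m+1-i}-a_2$ for $i<j$, $B_{ii}=b_i$, $B_{ij}=0$ for $i>j$; for each $i$ let ${\bf v}_i$ be the eigenvector of ${\bf B}$ with eigenvalue $b_i$ whose $i$-th coordinate is $1$ and whose later coordinates vanish. Assume $b_i+c_k-a_2\ne0$ for all $i,k$ and let $\langle\cdot,\cdot\rangle$ be the real symmetric bilinear form with $\langle{\bf v}_i,{\bf v}_j\rangle=0$ for $i\ne j$ and $$\langle{\bf v}_i,{\bf v}_i\rangle=\frac{\prod_{k=i+1}^m(b_i-b_k)}{\prod_{k=1}^{i-1}(b_i-b_k)}\cdot\frac{\prod_{k=m+2-i}^m(b_i+c_k-a_2)}{\prod_{k=1}^{m+1-i}(b_i+c_k-a_2)}.$$ Then this form is sign-definite (positive- or negative-definite) if and only if one of the following two systems of inequalities holds: (I) $b_{m+1-i}+c_i>a_2>b_{m+1-i}+c_{i+1}$ for $i=1,\dots,m-1$, and $b_1+c_m>a_2$; (II) $b_i+c_{m-i}>a_2>b_i+c_{m+1-i}$ for $i=1,\dots,m-1$, and $a_2>b_m+c_1$. Moreover, if $\epsilon\langle\cdot,\cdot\rangle$ is positive-definite for $\epsilon=\pm1$, then $\epsilon=\mathrm{sign}(a_1-a_2)$;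 if (I) holds then $a_1>a_2$, and if (II) holds then $a_1<a_2$.
   Context: Empty products equal $1$. *)

theory Defs
  imports Complex_Main
begin

text \<open>Vectors in R^m are modelled as functions nat => real supported on {1..m}.\<close>
definition vsp :: "nat \<Rightarrow> (nat \<Rightarrow> real) set" where
  "vsp m = {x. \<forall>k. (k < 1 \<or> m < k) \<longrightarrow> x k = 0}"

definition matvec :: "nat \<Rightarrow> (nat \<Rightarrow> nat \<Rightarrow> real) \<Rightarrow> (nat \<Rightarrow> real) \<Rightarrow> (nat \<Rightarrow> real)" where
  "matvec m B x = (\<lambda>i. if 1 \<le> i \<and> i \<le> m then (\<Sum>j=1..m. B i j * x j) else 0)"

definition sym_bilinear_on :: "nat \<Rightarrow> ((nat \<Rightarrow> real) \<Rightarrow> (nat \<Rightarrow> real) \<Rightarrow> real) \<Rightarrow> bool" where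
  "sym_bilinear_on m F \<longleftrightarrow>
     (\<forall>x\<in>vsp m. \<forall>y\<in>vsp m. F x y = F y x) \<and>
     (\<forall>x\<in>vsp m. \<forall>y\<in>vsp m. \<forall>z\<in>vsp m. F (\<lambda>k. x k + y k) z = F x z + F y z) \<and>
     (\<forall>x\<in>vsp m. \<forall>z\<in>vsp m. \<forall>s::real. F (\<lambda>k. s * x k) z = s * F x z)"

definition pos_definite_on :: "nat \<Rightarrow> ((nat \<Rightarrow> real) \<Rightarrow> (nat \<Rightarrow> real) \<Rightarrow> real) \<Rightarrow> bool" where
  "pos_definite_on m F \<longleftrightarrow> (\<forall>x\<in>vsp m. x \<noteq> (\<lambda>_. 0) \<longrightarrow> F x x > 0)"

definition neg_definite_on :: "nat \<Rightarrow> ((nat \<Rightarrow> real) \<Rightarrow> (nat \<Rightarrow> real) \<Rightarrow> real) \<Rightarrow> bool" where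
  "neg_definite_on m F \<longleftrightarrow> (\<forall>x\<in>vsp m. x \<noteq> (\<lambda>_. 0) \<longrightarrow> F x x < 0)"

definition Bmat :: "nat \<Rightarrow> real \<Rightarrow> (nat \<Rightarrow> real) \<Rightarrow> (nat \<Rightarrow> real) \<Rightarrow> nat \<Rightarrow> nat \<Rightarrow> real" where
  "Bmat m a2 b c i j =
     (if i < j then b i + c (m + 1 - i) - a2 else if i = j then b i else 0)"

definition dval :: "nat \<Rightarrow> real \<Rightarrow> (nat \<Rightarrow> real) \<Rightarrow> (nat \<Rightarrow> real) \<Rightarrow> nat \<Rightarrow> real" where
  "dval m a2 b c i =
     (\<Prod>k=i+1..m. b i - b k) / (\<Prod>k=1..i-1. b i - b k) *
     ((\<Prod>k=m+2-i..m. b i + c k - a2) / (\<Prod>k=1..m+1-i. b i + c k - a2))"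

definition condI :: "nat \<Rightarrow> real \<Rightarrow> (nat \<Rightarrow> real) \<Rightarrow> (nat \<Rightarrow> real) \<Rightarrow> bool" where
  "condI m a2 b c \<longleftrightarrow>
     (\<forall>i\<in>{1..m-1}. b (m+1-i) + c i > a2 \<and> a2 > b (m+1-i) + c (i+1)) \<and> b 1 + c m > a2"

definition condII :: "nat \<Rightarrow> real \<Rightarrow> (nat \<Rightarrow> real) \<Rightarrow> (nat \<Rightarrow> real) \<Rightarrow> bool" where
  "condII m a2 b c \<longleftrightarrow>
     (\<forall>i\<in>{1..m-1}. b i + c (m-i) > a2 \<and> a2 > b i + c (m+1-i)) \<and> a2 > b m + c 1"

end

(*
  The v i are unitriangular, hence a basis of R^m, and F-orthogonal, so F is positive (negative)
  definite iff every <v i, v i> is positive (negative).  The sign of <v i, v i> is (-1)^(i - 1 + N i),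
  where N i counts the k with c k < a2 - b i.  Since b is decreasing, N is nondecreasing, and
  0 <= N i <= m.  All signs positive force N to increase strictly with N i of the parity of i - 1,
  whence N i = i - 1; all signs negative force N i = i.  As c is decreasing, N i = n just says
  that a2 - b i lies between c (m + 1 - n) and c (m - n), and this is system (I) resp. (II).
  Summing the antidiagonal inequalities b i + c (m + 1 - i) > a2 (resp. < a2) and comparing
  with the trace relation gives the sign of a1 - a2.
*)
theory Submission
  imports Defs
begin

lemma vsp_sum:
  assumes "\<And>i. i \<in> I \<Longrightarrow> v i \<in> vsp m"
  shows "(\<lambda>k. \<Sum>i\<in>I. \<alpha> i * v i k) \<in> vsp m"
  using assms unfolding vsp_def by (simp add: sum.neutral)

lemma sym_bilinear_onD:
  assumes "sym_bilinear_on m F"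
  shows sym_bilinear_on_commute: "x \<in> vsp m \<Longrightarrow> y \<in> vsp m \<Longrightarrow> F x y = F y x"
    and sym_bilinear_on_add_left:
      "x \<in> vsp m \<Longrightarrow> y \<in> vsp m \<Longrightarrow> z \<in> vsp m \<Longrightarrow> F (\<lambda>k. x k + y k) z = F x z + F y z"
    and sym_bilinear_on_scale_left:
      "x \<in> vsp m \<Longrightarrow> z \<in> vsp m \<Longrightarrow> F (\<lambda>k. s * x k) z = s * F x z"
  using assms unfolding sym_bilinear_on_def by blast+

lemma sym_bilinear_on_sum_left:
  assumes F: "sym_bilinear_on m F" and "finite I"
    and v: "\<And>i. i \<in> I \<Longrightarrow> v i \<in> vsp m" and z: "z \<in> vsp m"
  shows "F (\<lambda>k. \<Sum>i\<in>I. \<alpha> i * v i k) z = (\<Sum>i\<in>I. \<alpha> i * F (v i) z)"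
  using \<open>finite I\<close> v
proof (induction I rule: finite_induct)
  case empty
  have "(\<lambda>k. 0) \<in> vsp m" unfolding vsp_def by simp
  from sym_bilinear_on_scale_left[OF F this z, of 0] show ?case by simp
next
  case (insert j I)
  have vj: "v j \<in> vsp m" and rest: "(\<lambda>k. \<Sum>i\<in>I. \<alpha> i * v i k) \<in> vsp m"
    using insert.prems by (auto intro: vsp_sum)
  have scaled: "(\<lambda>k. \<alpha> j * v j k) \<in> vsp m"
    using vj unfolding vsp_def by simp
  have "F (\<lambda>k. \<Sum>i\<in>insert j I. \<alpha> i * v i k) z
      = F (\<lambda>k. \<alpha> j * v j k) z + F (\<lambda>k. \<Sum>i\<in>I. \<alpha> i * v i k) z"
    using sym_bilinear_on_add_left[OF F scaled rest z] insert.hyps by simp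
  also have "\<dots> = \<alpha> j * F (v j) z + (\<Sum>i\<in>I. \<alpha> i * F (v i) z)"
    using sym_bilinear_on_scale_left[OF F vj z] insert by simp
  finally show ?case using insert.hyps by simp
qed

lemma sym_bilinear_on_uminus:
  "sym_bilinear_on m F \<Longrightarrow> sym_bilinear_on m (\<lambda>x y. - F x y)"
  unfolding sym_bilinear_on_def by simp

lemma neg_definite_on_iff_uminus:
  "neg_definite_on m F \<longleftrightarrow> pos_definite_on m (\<lambda>x y. - F x y)"
  unfolding neg_definite_on_def pos_definite_on_def by simp

lemma unitriangular_spans_vsp:
  assumes v_sp: "\<And>i. i \<in> {1..m} \<Longrightarrow> v i \<in> vsp m"
    and v_one: "\<And>i. i \<in> {1..m} \<Longrightarrow> v i i = 1"
    and v_zero: "\<And>i k. i \<in> {1..m} \<Longrightarrow> i < k \<Longrightarrow> v i k = 0"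
    and x: "x \<in> vsp m"
  shows "\<exists>\<alpha>. x = (\<lambda>k. \<Sum>i=1..m. \<alpha> i * v i k)"
proof -
  have "\<exists>\<alpha>. x = (\<lambda>k. \<Sum>i=1..n. \<alpha> i * v i k)"
    if "n \<le> m" "x \<in> vsp m" "\<forall>k>n. x k = 0" for n x
    using that
  proof (induction n arbitrary: x)
    case 0
    then have "x k = 0" for k unfolding vsp_def by (cases "k = 0") auto
    then have "x = (\<lambda>k. 0)" by blast
    then show ?case by simp
  next
    case (Suc n)
    have vn: "v (Suc n) \<in> vsp m" using v_sp Suc.prems(1) by simp
    define y where "y = (\<lambda>k. x k - x (Suc n) * v (Suc n) k)"
    have "y \<in> vsp m" using Suc.prems(2) vn unfolding vsp_def y_def by simp
    moreover have "y k = 0" if "k > n" for k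
    proof (cases "k = Suc n")
      case True
      then show ?thesis using v_one[of "Suc n"] Suc.prems(1) by (simp add: y_def)
    next
      case False
      then show ?thesis using v_zero[of "Suc n" k] Suc.prems that by (simp add: y_def)
    qed
    ultimately obtain \<alpha> where \<alpha>: "y = (\<lambda>k. \<Sum>i=1..n. \<alpha> i * v i k)"
      using Suc.IH Suc.prems(1) by force
    have "x = (\<lambda>k. \<Sum>i=1..Suc n. (\<alpha>(Suc n := x (Suc n))) i * v i k)"
    proof
      fix k
      have "(\<Sum>i=1..n. (\<alpha>(Suc n := x (Suc n))) i * v i k) = y k"
        unfolding \<alpha> by (rule sum.cong) auto
      then show "x k = (\<Sum>i=1..Suc n. (\<alpha>(Suc n := x (Suc n))) i * v i k)"
        by (simp add: y_def)
    qed
    then show ?case by blast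
  qed
  moreover have "\<forall>k>m. x k = 0" using x unfolding vsp_def by simp
  ultimately show ?thesis using x by blast
qed

lemma sym_bilinear_on_orthogonal_diag:
  fixes \<alpha> :: "nat \<Rightarrow> real"
  assumes F: "sym_bilinear_on m F"
    and v_sp: "\<And>i. i \<in> {1..m} \<Longrightarrow> v i \<in> vsp m"
    and orth: "\<And>i j. i \<in> {1..m} \<Longrightarrow> j \<in> {1..m} \<Longrightarrow> i \<noteq> j \<Longrightarrow> F (v i) (v j) = 0"
  defines "x \<equiv> \<lambda>k. \<Sum>i=1..m. \<alpha> i * v i k"
  shows "F x x = (\<Sum>i=1..m. \<alpha> i ^ 2 * F (v i) (v i))"
proof -
  have x: "x \<in> vsp m" unfolding x_def by (rule vsp_sum) (rule v_sp)
  have "F (v i) x = \<alpha> i * F (v i) (v i)" if i: "i \<in> {1..m}" for i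
  proof -
    have "F (v i) x = F x (v i)" using sym_bilinear_on_commute[OF F v_sp[OF i] x] .
    also have "\<dots> = (\<Sum>j=1..m. \<alpha> j * F (v j) (v i))"
      unfolding x_def by (rule sym_bilinear_on_sum_left[OF F _ v_sp v_sp[OF i]]) simp_all
    also have "\<dots> = (\<Sum>j=1..m. if j = i then \<alpha> i * F (v i) (v i) else 0)"
      by (rule sum.cong) (use orth i in auto)
    finally show ?thesis using i by simp
  qed
  then have "(\<Sum>i=1..m. \<alpha> i * F (v i) x) = (\<Sum>i=1..m. \<alpha> i ^ 2 * F (v i) (v i))"
    by (intro sum.cong) (simp_all add: power2_eq_square mult.assoc)
  moreover have "F x x = (\<Sum>i=1..m. \<alpha> i * F (v i) x)"
    unfolding x_def by (rule sym_bilinear_on_sum_left[OF F _ v_sp]) (use x x_def in simp_all)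
  ultimately show ?thesis by simp
qed

lemma pos_definite_on_iff_orthogonal_basis:
  assumes F: "sym_bilinear_on m F"
    and v_sp: "\<And>i. i \<in> {1..m} \<Longrightarrow> v i \<in> vsp m"
    and v_one: "\<And>i. i \<in> {1..m} \<Longrightarrow> v i i = 1"
    and v_zero: "\<And>i k. i \<in> {1..m} \<Longrightarrow> i < k \<Longrightarrow> v i k = 0"
    and orth: "\<And>i j. i \<in> {1..m} \<Longrightarrow> j \<in> {1..m} \<Longrightarrow> i \<noteq> j \<Longrightarrow> F (v i) (v j) = 0"
  shows "pos_definite_on m F \<longleftrightarrow> (\<forall>i\<in>{1..m}. 0 < F (v i) (v i))"
proof
  assume "pos_definite_on m F"
  moreover have "v i \<noteq> (\<lambda>_. 0)" if "i \<in> {1..m}" for i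
    using v_one[OF that] by force
  ultimately show "\<forall>i\<in>{1..m}. 0 < F (v i) (v i)"
    unfolding pos_definite_on_def using v_sp by blast
next
  assume pos: "\<forall>i\<in>{1..m}. 0 < F (v i) (v i)"
  show "pos_definite_on m F" unfolding pos_definite_on_def
  proof (intro ballI impI)
    fix x assume x: "x \<in> vsp m" "x \<noteq> (\<lambda>_. 0)"
    obtain \<alpha> where \<alpha>: "x = (\<lambda>k. \<Sum>i=1..m. \<alpha> i * v i k)"
      using unitriangular_spans_vsp[OF v_sp v_one v_zero x(1)] by blast
    then obtain j where j: "j \<in> {1..m}" "\<alpha> j \<noteq> 0" using x(2) by force
    have "0 \<le> \<alpha> i ^ 2 * F (v i) (v i)" if "i \<in> {1..m}" for i
      using pos that by (simp add: less_imp_le)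
    then have "0 < (\<Sum>i=1..m. \<alpha> i ^ 2 * F (v i) (v i))"
      by (intro sum_pos2[OF _ j(1)]) (use pos j in simp_all)
    then show "0 < F x x"
      unfolding \<alpha> using sym_bilinear_on_orthogonal_diag[OF F v_sp orth, where \<alpha> = \<alpha>] by simp
  qed
qed

lemma sgn_prod_nonzero:
  fixes f :: "'a \<Rightarrow> 'b::linordered_idom"
  assumes "finite A" and "\<And>k. k \<in> A \<Longrightarrow> f k \<noteq> 0"
  shows "sgn (prod f A) = (- 1) ^ card {k\<in>A. f k < 0}"
  using assms
proof (induction A rule: finite_induct)
  case (insert j A)
  have IH: "sgn (prod f A) = (- 1) ^ card {k\<in>A. f k < 0}"
    using insert by simp
  show ?case
  proof (cases "f j < 0")
    case True
    then have "{k\<in>insert j A. f k < 0} = insert j {k\<in>A. f k < 0}" by auto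
    then show ?thesis using True IH insert.hyps by (simp add: sgn_mult)
  next
    case False
    then have "{k\<in>insert j A. f k < 0} = {k\<in>A. f k < 0}" by auto
    moreover have "0 < f j" using False insert.prems[of j] by auto
    ultimately show ?thesis using IH insert.hyps by (simp add: sgn_mult)
  qed
qed simp

lemma sgn_divide_eq_sgn_mult:
  fixes x y :: "'a::linordered_field"
  shows "sgn (x / y) = sgn (x * y)"
  by (cases y rule: linorder_cases) (simp_all add: sgn_mult)

definition count_below :: "nat \<Rightarrow> (nat \<Rightarrow> 'a::linorder) \<Rightarrow> 'a \<Rightarrow> nat" where
  "count_below m c t = card {k\<in>{1..m}. c k < t}"

lemma count_below_le: "count_below m c t \<le> m"
proof -
  have "card {k\<in>{1..m}. c k < t} \<le> card {1..m}" by (rule card_mono) auto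
  then show ?thesis unfolding count_below_def by simp
qed

lemma count_below_mono: "t \<le> t' \<Longrightarrow> count_below m c t \<le> count_below m c t'"
  unfolding count_below_def by (rule card_mono) auto

text \<open>For strictly decreasing c the entries below t form a final segment {m+1-n..m}.\<close>
lemma count_below_eq_iff:
  fixes c :: "nat \<Rightarrow> 'a::linorder"
  assumes dec: "\<And>i j. 1 \<le> i \<Longrightarrow> i < j \<Longrightarrow> j \<le> m \<Longrightarrow> c i > c j"
    and ne: "\<And>k. k \<in> {1..m} \<Longrightarrow> c k \<noteq> t" and "n \<le> m"
  shows "count_below m c t = n \<longleftrightarrow> (n < m \<longrightarrow> t < c (m - n)) \<and> (0 < n \<longrightarrow> c (m + 1 - n) < t)"
proof -
  have dec_le: "c j \<le> c i" if "1 \<le> i" "i \<le> j" "j \<le> m" for i j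
    using dec[of i j] that by (cases "i = j") auto
  show ?thesis
  proof
    assume count: "count_below m c t = n"
    show "(n < m \<longrightarrow> t < c (m - n)) \<and> (0 < n \<longrightarrow> c (m + 1 - n) < t)"
    proof (intro conjI impI)
      assume "n < m"
      show "t < c (m - n)"
      proof (rule ccontr)
        assume "\<not> t < c (m - n)"
        then have "{m - n..m} \<subseteq> {k\<in>{1..m}. c k < t}"
          using ne[of "m - n"] \<open>n < m\<close> dec_le[of "m - n"] by fastforce
        from card_mono[OF _ this] show False
          using count \<open>n < m\<close> unfolding count_below_def by simp
      qed
    next
      assume "0 < n"
      show "c (m + 1 - n) < t"
      proof (rule ccontr)
        assume "\<not> c (m + 1 - n) < t"
        then have "{k\<in>{1..m}. c k < t} \<subseteq> {m + 2 - n..m}"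
          using ne[of "m + 1 - n"] \<open>0 < n\<close> \<open>n \<le> m\<close> dec_le[of _ "m + 1 - n"]
          by (force simp: not_less_eq_eq)
        from card_mono[OF _ this] show False
          using count \<open>0 < n\<close> \<open>n \<le> m\<close> unfolding count_below_def by simp
      qed
    qed
  next
    assume bounds: "(n < m \<longrightarrow> t < c (m - n)) \<and> (0 < n \<longrightarrow> c (m + 1 - n) < t)"
    have "{k\<in>{1..m}. c k < t} = {m + 1 - n..m}"
    proof (intro equalityI subsetI)
      fix k assume k: "k \<in> {k\<in>{1..m}. c k < t}"
      show "k \<in> {m + 1 - n..m}"
      proof (rule ccontr)
        assume "k \<notin> {m + 1 - n..m}"
        then have "k \<le> m - n" "n < m" using k by auto
        then show False using bounds dec_le[of k "m - n"] k by auto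
      qed
    next
      fix k assume k: "k \<in> {m + 1 - n..m}"
      then have "0 < n" using \<open>n \<le> m\<close> by auto
      moreover have "c k \<le> c (m + 1 - n)" using dec_le[of "m + 1 - n" k] k \<open>n \<le> m\<close> by simp
      ultimately show "k \<in> {k\<in>{1..m}. c k < t}"
        using bounds k \<open>n \<le> m\<close> by auto
    qed
    then show "count_below m c t = n" unfolding count_below_def using \<open>n \<le> m\<close> by simp
  qed
qed

lemma increasing_nat_seq_squeezed:
  fixes N :: "nat \<Rightarrow> nat"
  assumes step: "\<And>i. 1 \<le> i \<Longrightarrow> i < m \<Longrightarrow> N i < N (Suc i)"
    and low: "s \<le> N 1" and high: "N m \<le> s + (m - 1)" and i: "i \<in> {1..m}"
  shows "N i = s + (i - 1)"
proof -
  have gap: "N i + (j - i) \<le> N j" if "1 \<le> i" "i \<le> j" "j \<le> m" for i j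
    using that(2,3)
  proof (induction j rule: dec_induct)
    case (step j)
    then show ?case using step.IH assms(1)[of j] \<open>1 \<le> i\<close> by (simp add: Suc_diff_le)
  qed simp
  show ?thesis using gap[of 1 i] gap[of i m] low high i by auto
qed

lemma sgn_dval:
  assumes b_dec: "\<And>i j. 1 \<le> i \<Longrightarrow> i < j \<Longrightarrow> j \<le> m \<Longrightarrow> b i > b j"
    and nonzero: "\<And>i k. i \<in> {1..m} \<Longrightarrow> k \<in> {1..m} \<Longrightarrow> b i + c k - a2 \<noteq> 0"
    and i: "i \<in> {1..m}"
  shows "sgn (dval m a2 b c i) = (- 1) ^ (i - 1 + count_below m c (a2 - b i))"
proof -
  define P where "P = (\<Prod>k=i+1..m. b i - b k)"
  define Q where "Q = (\<Prod>k=1..i-1. b i - b k)"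
  define R where "R = (\<Prod>k=m+2-i..m. b i + c k - a2)"
  define S where "S = (\<Prod>k=1..m+1-i. b i + c k - a2)"
  have "sgn P = 1"
    unfolding P_def using b_dec[of i] i by (intro sgn_pos prod_pos) auto
  moreover have "sgn Q = (- 1) ^ (i - 1)"
  proof -
    have "{k\<in>{1..i-1}. b i - b k < 0} = {1..i-1}" using b_dec[of _ i] i by auto
    then show ?thesis unfolding Q_def using sgn_prod_nonzero[of "{1..i-1}" "\<lambda>k. b i - b k"] by force
  qed
  moreover have "sgn (R * S) = (- 1) ^ count_below m c (a2 - b i)"
  proof -
    have split: "{m + 2 - i..m} \<union> {1..m + 1 - i} = {1..m}" using i by auto
    have "R * S = (\<Prod>k=1..m. b i + c k - a2)"
      unfolding R_def S_def split[symmetric] by (rule prod.union_disjoint[symmetric]) auto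
    moreover have "{k\<in>{1..m}. b i + c k - a2 < 0} = {k\<in>{1..m}. c k < a2 - b i}" by auto
    ultimately show ?thesis
      using sgn_prod_nonzero[of "{1..m}" "\<lambda>k. b i + c k - a2"] nonzero[OF i]
      unfolding count_below_def by simp
  qed
  moreover have "dval m a2 b c i = P / Q * (R / S)"
    unfolding dval_def P_def Q_def R_def S_def ..
  ultimately show ?thesis
    by (simp only: sgn_mult[of "P / Q"] sgn_divide_eq_sgn_mult sgn_mult[of P Q] power_add)
qed

lemma dval_pos_iff_count:
  assumes m: "1 \<le> m"
    and b_dec: "\<And>i j. 1 \<le> i \<Longrightarrow> i < j \<Longrightarrow> j \<le> m \<Longrightarrow> b i > b j"
    and nonzero: "\<And>i k. i \<in> {1..m} \<Longrightarrow> k \<in> {1..m} \<Longrightarrow> b i + c k - a2 \<noteq> 0"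
  shows "(\<forall>i\<in>{1..m}. 0 < dval m a2 b c i) \<longleftrightarrow> (\<forall>i\<in>{1..m}. count_below m c (a2 - b i) = i - 1)"
proof -
  define N where "N i = count_below m c (a2 - b i)" for i
  have sign: "0 < dval m a2 b c i \<longleftrightarrow> even (i - 1 + N i)" if "i \<in> {1..m}" for i
    using sgn_dval[OF b_dec nonzero that] unfolding N_def
    by (simp add: sgn_1_pos[symmetric] minus_one_power_iff)
  have mono: "N i \<le> N (Suc i)" if "1 \<le> i" "i < m" for i
    unfolding N_def using b_dec[of i "Suc i"] that by (intro count_below_mono) simp
  show ?thesis
  proof
    assume pos: "\<forall>i\<in>{1..m}. 0 < dval m a2 b c i"
    have step: "N i < N (Suc i)" if "1 \<le> i" "i < m" for i
    proof -
      have "even (i - 1 + N i)" "even (i + N (Suc i))"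
        using sign[of i] sign[of "Suc i"] pos that by auto
      then have "N i \<noteq> N (Suc i)" using \<open>1 \<le> i\<close> by presburger
      then show ?thesis using mono[OF that] by simp
    qed
    have "N m \<noteq> m" using sign[of m] pos m by auto
    then have "N m \<le> 0 + (m - 1)" using count_below_le[of m c "a2 - b m"] unfolding N_def by linarith
    from increasing_nat_seq_squeezed[OF step _ this]
    show "\<forall>i\<in>{1..m}. count_below m c (a2 - b i) = i - 1" unfolding N_def by simp
  next
    assume "\<forall>i\<in>{1..m}. count_below m c (a2 - b i) = i - 1"
    then show "\<forall>i\<in>{1..m}. 0 < dval m a2 b c i" using sign unfolding N_def by simp
  qed
qed

lemma dval_neg_iff_count:
  assumes m: "1 \<le> m"
    and b_dec: "\<And>i j. 1 \<le> i \<Longrightarrow> i < j \<Longrightarrow> j \<le> m \<Longrightarrow> b i > b j"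
    and nonzero: "\<And>i k. i \<in> {1..m} \<Longrightarrow> k \<in> {1..m} \<Longrightarrow> b i + c k - a2 \<noteq> 0"
  shows "(\<forall>i\<in>{1..m}. dval m a2 b c i < 0) \<longleftrightarrow> (\<forall>i\<in>{1..m}. count_below m c (a2 - b i) = i)"
proof -
  define N where "N i = count_below m c (a2 - b i)" for i
  have sign: "dval m a2 b c i < 0 \<longleftrightarrow> odd (i - 1 + N i)" if "i \<in> {1..m}" for i
    using sgn_dval[OF b_dec nonzero that] unfolding N_def
    by (simp add: sgn_1_neg[symmetric] minus_one_power_iff)
  have mono: "N i \<le> N (Suc i)" if "1 \<le> i" "i < m" for i
    unfolding N_def using b_dec[of i "Suc i"] that by (intro count_below_mono) simp
  show ?thesis
  proof
    assume neg: "\<forall>i\<in>{1..m}. dval m a2 b c i < 0"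
    have step: "N i < N (Suc i)" if "1 \<le> i" "i < m" for i
    proof -
      have "odd (i - 1 + N i)" "odd (i + N (Suc i))"
        using sign[of i] sign[of "Suc i"] neg that by auto
      then have "N i \<noteq> N (Suc i)" using \<open>1 \<le> i\<close> by presburger
      then show ?thesis using mono[OF that] by simp
    qed
    have low: "1 \<le> N 1" using sign[of 1] neg m by (cases "N 1") auto
    have high: "N m \<le> 1 + (m - 1)" using count_below_le[of m c "a2 - b m"] m unfolding N_def by simp
    have "N i = 1 + (i - 1)" if "i \<in> {1..m}" for i
      using increasing_nat_seq_squeezed[OF step low high that] .
    then show "\<forall>i\<in>{1..m}. count_below m c (a2 - b i) = i" unfolding N_def by simp
  next
    assume "\<forall>i\<in>{1..m}. count_below m c (a2 - b i) = i"
    then show "\<forall>i\<in>{1..m}. dval m a2 b c i < 0" using sign unfolding N_def by auto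
  qed
qed

lemma condI_antidiagonal:
  assumes "1 \<le> m"
  shows "condI m a2 b c \<longleftrightarrow>
    (\<forall>i\<in>{1..m}. a2 < b i + c (m + 1 - i) \<and> (1 < i \<longrightarrow> b i + c (m + 2 - i) < a2))"
proof
  assume C: "condI m a2 b c"
  show "\<forall>i\<in>{1..m}. a2 < b i + c (m + 1 - i) \<and> (1 < i \<longrightarrow> b i + c (m + 2 - i) < a2)"
  proof
    fix i assume i: "i \<in> {1..m}"
    show "a2 < b i + c (m + 1 - i) \<and> (1 < i \<longrightarrow> b i + c (m + 2 - i) < a2)"
    proof (cases "i = 1")
      case True
      then show ?thesis using C unfolding condI_def by simp
    next
      case False
      then have "m + 1 - i \<in> {1..m-1}" "m + 1 - (m + 1 - i) = i" "m + 1 - i + 1 = m + 2 - i"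
        using i by auto
      then show ?thesis using C unfolding condI_def by metis
    qed
  qed
next
  assume A: "\<forall>i\<in>{1..m}. a2 < b i + c (m + 1 - i) \<and> (1 < i \<longrightarrow> b i + c (m + 2 - i) < a2)"
  have "b (m + 1 - j) + c j > a2 \<and> a2 > b (m + 1 - j) + c (j + 1)" if j: "j \<in> {1..m-1}" for j
  proof -
    have "m + 1 - j \<in> {1..m}" "1 < m + 1 - j" "m + 1 - (m + 1 - j) = j" "m + 2 - (m + 1 - j) = j + 1"
      using j by auto
    then show ?thesis using A by metis
  qed
  moreover have "b 1 + c m > a2" using A[rule_format, of 1] \<open>1 \<le> m\<close> by simp
  ultimately show "condI m a2 b c" unfolding condI_def by blast
qed

lemma condII_antidiagonal:
  assumes "1 \<le> m"
  shows "condII m a2 b c \<longleftrightarrow>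
    (\<forall>i\<in>{1..m}. (i < m \<longrightarrow> a2 < b i + c (m - i)) \<and> b i + c (m + 1 - i) < a2)"
  unfolding condII_def using assms by (auto simp: Ball_def less_Suc_eq_le le_eq_less_or_eq)

lemma condI_iff_count:
  assumes m: "1 \<le> m"
    and c_dec: "\<And>i j. 1 \<le> i \<Longrightarrow> i < j \<Longrightarrow> j \<le> m \<Longrightarrow> c i > c j"
    and nonzero: "\<And>i k. i \<in> {1..m} \<Longrightarrow> k \<in> {1..m} \<Longrightarrow> b i + c k - a2 \<noteq> 0"
  shows "condI m a2 b c \<longleftrightarrow> (\<forall>i\<in>{1..m}. count_below m c (a2 - b i) = i - 1)"
proof -
  have "count_below m c (a2 - b i) = i - 1 \<longleftrightarrow>
      a2 < b i + c (m + 1 - i) \<and> (1 < i \<longrightarrow> b i + c (m + 2 - i) < a2)" if i: "i \<in> {1..m}" for i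
  proof -
    have ne: "c k \<noteq> a2 - b i" if "k \<in> {1..m}" for k using nonzero[OF i that] by auto
    from count_below_eq_iff[where t = "a2 - b i" and n = "i - 1", OF c_dec ne] show ?thesis
      using i by (auto simp: Suc_diff_le numeral_2_eq_2)
  qed
  then show ?thesis unfolding condI_antidiagonal[OF m] by auto
qed

lemma condII_iff_count:
  assumes m: "1 \<le> m"
    and c_dec: "\<And>i j. 1 \<le> i \<Longrightarrow> i < j \<Longrightarrow> j \<le> m \<Longrightarrow> c i > c j"
    and nonzero: "\<And>i k. i \<in> {1..m} \<Longrightarrow> k \<in> {1..m} \<Longrightarrow> b i + c k - a2 \<noteq> 0"
  shows "condII m a2 b c \<longleftrightarrow> (\<forall>i\<in>{1..m}. count_below m c (a2 - b i) = i)"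
proof -
  have "count_below m c (a2 - b i) = i \<longleftrightarrow>
      (i < m \<longrightarrow> a2 < b i + c (m - i)) \<and> b i + c (m + 1 - i) < a2" if i: "i \<in> {1..m}" for i
  proof -
    have ne: "c k \<noteq> a2 - b i" if "k \<in> {1..m}" for k using nonzero[OF i that] by auto
    from count_below_eq_iff[where t = "a2 - b i" and n = i, OF c_dec ne] show ?thesis using i by auto
  qed
  then show ?thesis unfolding condII_antidiagonal[OF m] by auto
qed

lemma sum_antidiagonal:
  fixes b c :: "nat \<Rightarrow> 'a::comm_monoid_add"
  shows "(\<Sum>i=1..m. b i + c (m + 1 - i)) = (\<Sum>i=1..m. b i + c i)"
  using sum.atLeastAtMost_rev[of c 1 m] by (simp add: sum.distrib)

lemma condI_imp_gt:
  assumes m: "1 \<le> m" and "condI m a2 b c"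
    and trace: "a1 + (real m - 1) * a2 = (\<Sum>i=1..m. b i + c i)"
  shows "a2 < a1"
proof -
  have "(\<Sum>i=1..m. a2) < (\<Sum>i=1..m. b i + c (m + 1 - i))"
    using m assms(2) unfolding condI_antidiagonal[OF m] by (intro sum_strict_mono) auto
  then show ?thesis using trace unfolding sum_antidiagonal by (simp add: algebra_simps)
qed

lemma condII_imp_lt:
  assumes m: "1 \<le> m" and "condII m a2 b c"
    and trace: "a1 + (real m - 1) * a2 = (\<Sum>i=1..m. b i + c i)"
  shows "a1 < a2"
proof -
  have "(\<Sum>i=1..m. b i + c (m + 1 - i)) < (\<Sum>i=1..m. a2)"
    using m assms(2) unfolding condII_antidiagonal[OF m] by (intro sum_strict_mono) auto
  then show ?thesis using trace unfolding sum_antidiagonal by (simp add: algebra_simps)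
qed

theorem theorem2p7:
  fixes m :: nat and a1 a2 :: real and b c :: "nat \<Rightarrow> real"
    and v :: "nat \<Rightarrow> nat \<Rightarrow> real"
    and F :: "(nat \<Rightarrow> real) \<Rightarrow> (nat \<Rightarrow> real) \<Rightarrow> real"
  assumes m2: "m \<ge> 2"
    and a_ne: "a1 \<noteq> a2"
    and b_dec: "\<And>i j. 1 \<le> i \<Longrightarrow> i < j \<Longrightarrow> j \<le> m \<Longrightarrow> b i > b j"
    and c_dec: "\<And>i j. 1 \<le> i \<Longrightarrow> i < j \<Longrightarrow> j \<le> m \<Longrightarrow> c i > c j"
    and trace: "a1 + (real m - 1) * a2 = (\<Sum>i=1..m. b i + c i)"
    and nonzero: "\<And>i k. i \<in> {1..m} \<Longrightarrow> k \<in> {1..m} \<Longrightarrow> b i + c k - a2 \<noteq> 0"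
    and v_sp: "\<And>i. i \<in> {1..m} \<Longrightarrow> v i \<in> vsp m"
    and v_eig: "\<And>i. i \<in> {1..m} \<Longrightarrow> matvec m (Bmat m a2 b c) (v i) = (\<lambda>k. b i * v i k)"
    and v_one: "\<And>i. i \<in> {1..m} \<Longrightarrow> v i i = 1"
    and v_zero: "\<And>i k. i \<in> {1..m} \<Longrightarrow> i < k \<Longrightarrow> v i k = 0"
    and F_bil: "sym_bilinear_on m F"
    and F_orth: "\<And>i j. i \<in> {1..m} \<Longrightarrow> j \<in> {1..m} \<Longrightarrow> i \<noteq> j \<Longrightarrow> F (v i) (v j) = 0"
    and F_diag: "\<And>i. i \<in> {1..m} \<Longrightarrow> F (v i) (v i) = dval m a2 b c i"
  shows "(pos_definite_on m F \<or> neg_definite_on m F \<longleftrightarrow> condI m a2 b c \<or> condII m a2 b c)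
    \<and> (pos_definite_on m F \<longrightarrow> a1 > a2)
    \<and> (neg_definite_on m F \<longrightarrow> a1 < a2)
    \<and> (condI m a2 b c \<longrightarrow> a1 > a2)
    \<and> (condII m a2 b c \<longrightarrow> a1 < a2)"
proof -
  have m: "1 \<le> m" using m2 by simp
  have "pos_definite_on m F \<longleftrightarrow> (\<forall>i\<in>{1..m}. 0 < dval m a2 b c i)"
    using pos_definite_on_iff_orthogonal_basis[OF F_bil v_sp v_one v_zero F_orth] F_diag by simp
  also have "\<dots> \<longleftrightarrow> condI m a2 b c"
    using dval_pos_iff_count[OF m b_dec nonzero] condI_iff_count[OF m c_dec nonzero] by simp
  finally have pos: "pos_definite_on m F \<longleftrightarrow> condI m a2 b c" .
  have "neg_definite_on m F \<longleftrightarrow> (\<forall>i\<in>{1..m}. dval m a2 b c i < 0)"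
    unfolding neg_definite_on_iff_uminus
    using pos_definite_on_iff_orthogonal_basis[OF sym_bilinear_on_uminus[OF F_bil] v_sp v_one v_zero]
      F_orth F_diag by simp
  also have "\<dots> \<longleftrightarrow> condII m a2 b c"
    using dval_neg_iff_count[OF m b_dec nonzero] condII_iff_count[OF m c_dec nonzero] by simp
  finally have neg: "neg_definite_on m F \<longleftrightarrow> condII m a2 b c" .
  show ?thesis
    using pos neg condI_imp_gt[OF m _ trace] condII_imp_lt[OF m _ trace] by blast
qed

end
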